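(* Let $(X,d,\mu)$ be a space of homogeneous type, $1\leq r<\infty$, $q=2r-1$, and let $A$ be a Young function with $A\in B_{\rho}$ for all $\rho>r$. If $u\in RH_{q}$ and $u^{r}\in A_{\infty}$, then for every cube $Q$ of a dyadic system and every measurable set $G$, $$\|\chi_{G}u\|_{A,1Q}\leq c_{X}\,\kappa_{u}[u]_{RH_{q}}^{1+\frac{q}{4r}}\langle u\rangle_{c_{d}^{3}Q,1}\,\langle\chi_{G}\rangle_{c_{d}Q,s}^{u},$$ with $s=4\big(1+\frac{1}{2\tau[u^{r}]_{A_{\infty}}}\big)r$.
   Context: Space of homogeneous type: quasi-metric $d$, doubling Borel measure $\mu$. Dyadic system with parameters $c_0\le C_0$, $\delta$: cubes $Q=Q^k_j$ with $B(z^k_j,c_0\delta^k)\subset Q\subset B(z^k_j,C_0\delta^k)$; for $\alpha\ge1$, $\alpha Q:=B(z^k_j,\alpha C_0\delta^k)$, and $1Q=B(z^k_j,C_0\delta^k)$. Young function $A$; $\|g\|_{A,E}=\inf\{\lambda>0:\frac1{\mu(E)}\int_EA(|g|/\lambda)d\mu\le1\}$; $A\in B_\rho$ means $\int_1^\infty A(t)t^{-\rho}\frac{dt}t<\infty$. $\langle u\rangle_{E,1}=\frac{u(E)}{\mu(E)}$, $\langle\chi_G\rangle^u_{E,s}=\big(\frac{u(G\cap E)}{u(E)}\big)^{1/s}$. $w\in RH_q$ means $\big(\frac{w^q(B)}{\mu(B)}\big)^{1/q}\le[w]_{RH_q}\frac{w(c_dB)}{\mu(c_dB)}$ for all balls,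 $c_d$ a constant depending on $X$; $[w]_{A_\infty}$ is the Fujii–Wilson constant over balls; $\tau$ is the constant of the sharp reverse Hölder inequality in $X$ (for $w\in A_\infty$, exponent up to $1+\frac1{\tau[w]_{A_\infty}}$). The constant $\kappa_u$: since $A\in B_\rho$ for all $\rho>r$, for each $\varepsilon>0$ there is $\kappa(\varepsilon)$ with $A(t)\le c\,\kappa(\varepsilon)t^{r(1+\varepsilon)}$; $\kappa_u:=\kappa\big(\frac1{2\tau[u^r]_{A_\infty}}\big)$.
   Formalization: Each $\kappa(\varepsilon)$ is at least 1 and satisfies $A(t)\le\kappa(\varepsilon)t^{r(1+\varepsilon)}$ for t >= 1 only, the constant c being absorbed, in place of $A(t)\le c\,\kappa(\varepsilon)t^{r(1+\varepsilon)}$. Apart from conventions, each condition added here is assumed in the paper as well or is needed for the statement above to hold. *)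

theory Defs
  imports "HOL-Analysis.Analysis"
begin

definition qball :: "('a \<Rightarrow> 'a \<Rightarrow> real) \<Rightarrow> 'a \<Rightarrow> real \<Rightarrow> 'a set" where
  "qball d x \<rho> = {y. d x y < \<rho>}"

definition quasi_metric :: "('a \<Rightarrow> 'a \<Rightarrow> real) \<Rightarrow> real \<Rightarrow> bool" where
  "quasi_metric d K \<longleftrightarrow> 1 \<le> K \<and>
     (\<forall>x y. 0 \<le> d x y) \<and> (\<forall>x y. d x y = 0 \<longleftrightarrow> x = y) \<and>
     (\<forall>x y. d x y = d y x) \<and> (\<forall>x y z. d x z \<le> K * (d x y + d y z))"

definition qm_open :: "('a \<Rightarrow> 'a \<Rightarrow> real) \<Rightarrow> 'a set \<Rightarrow> bool" where
  "qm_open d U \<longleftrightarrow> (\<forall>x\<in>U. \<exists>\<rho>>0. qball d x \<rho> \<subseteq> U)"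

definition homogeneous_space :: "('a \<Rightarrow> 'a \<Rightarrow> real) \<Rightarrow> real \<Rightarrow> 'a measure \<Rightarrow> bool" where
  "homogeneous_space d K \<mu> \<longleftrightarrow> quasi_metric d K \<and> space \<mu> = UNIV \<and>
     (\<forall>U. qm_open d U \<longrightarrow> U \<in> sets \<mu>) \<and>
     (\<forall>x \<rho>. qball d x \<rho> \<in> sets \<mu>) \<and>
     (\<forall>x \<rho>. \<rho> > 0 \<longrightarrow> 0 < emeasure \<mu> (qball d x \<rho>) \<and> emeasure \<mu> (qball d x \<rho>) < \<infinity>) \<and>
     (\<exists>C. \<forall>x \<rho>. \<rho> > 0 \<longrightarrow>
        emeasure \<mu> (qball d x (2 * \<rho>)) \<le> ennreal C * emeasure \<mu> (qball d x \<rho>))"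

text \<open>Cubes Q k j (generation k :: int, index j in J k) with centres z k j.\<close>
definition dyadic_system ::
  "('a \<Rightarrow> 'a \<Rightarrow> real) \<Rightarrow> 'a measure \<Rightarrow> real \<Rightarrow> real \<Rightarrow> real \<Rightarrow>
   (int \<Rightarrow> 'i set) \<Rightarrow> (int \<Rightarrow> 'i \<Rightarrow> 'a set) \<Rightarrow> (int \<Rightarrow> 'i \<Rightarrow> 'a) \<Rightarrow> bool" where
  "dyadic_system d \<mu> c0 C0 \<delta> J Q z \<longleftrightarrow> 0 < c0 \<and> c0 \<le> C0 \<and> 0 < \<delta> \<and> \<delta> < 1 \<and>
     (\<forall>k. (\<Union>j\<in>J k. Q k j) = UNIV) \<and>
     (\<forall>k. \<forall>i\<in>J k. \<forall>j\<in>J k. i \<noteq> j \<longrightarrow> Q k i \<inter> Q k j = {}) \<and>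
     (\<forall>k l. k \<le> l \<longrightarrow> (\<forall>i\<in>J l. \<forall>j\<in>J k. Q l i \<subseteq> Q k j \<or> Q l i \<inter> Q k j = {})) \<and>
     (\<forall>k. \<forall>j\<in>J k. qball d (z k j) (c0 * \<delta> powr real_of_int k) \<subseteq> Q k j \<and>
                    Q k j \<subseteq> qball d (z k j) (C0 * \<delta> powr real_of_int k)) \<and>
     (\<forall>k. \<forall>j\<in>J k. Q k j \<in> sets \<mu>)"

definition dil_cube :: "('a \<Rightarrow> 'a \<Rightarrow> real) \<Rightarrow> real \<Rightarrow> real \<Rightarrow> (int \<Rightarrow> 'i \<Rightarrow> 'a) \<Rightarrow> real \<Rightarrow> int \<Rightarrow> 'i \<Rightarrow> 'a set" where
  "dil_cube d C0 \<delta> z \<alpha> k j = qball d (z k j) (\<alpha> * C0 * \<delta> powr real_of_int k)"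

definition loc_int :: "('a \<Rightarrow> 'a \<Rightarrow> real) \<Rightarrow> 'a measure \<Rightarrow> ('a \<Rightarrow> real) \<Rightarrow> bool" where
  "loc_int d \<mu> f \<longleftrightarrow> (\<forall>x \<rho>. \<rho> > 0 \<longrightarrow> set_integrable \<mu> (qball d x \<rho>) f)"

definition weight :: "('a \<Rightarrow> 'a \<Rightarrow> real) \<Rightarrow> 'a measure \<Rightarrow> ('a \<Rightarrow> real) \<Rightarrow> bool" where
  "weight d \<mu> w \<longleftrightarrow> w \<in> borel_measurable \<mu> \<and> (\<forall>x. 0 \<le> w x) \<and> loc_int d \<mu> w"

definition wmeas :: "'a measure \<Rightarrow> ('a \<Rightarrow> real) \<Rightarrow> 'a set \<Rightarrow> real" where
  "wmeas \<mu> u E = (LINT x:E|\<mu>. u x)"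

definition avg :: "'a measure \<Rightarrow> ('a \<Rightarrow> real) \<Rightarrow> 'a set \<Rightarrow> real" where
  "avg \<mu> f E = wmeas \<mu> f E / measure \<mu> E"

definition wavg_char :: "'a measure \<Rightarrow> ('a \<Rightarrow> real) \<Rightarrow> 'a set \<Rightarrow> 'a set \<Rightarrow> real \<Rightarrow> real" where
  "wavg_char \<mu> u G E s = (wmeas \<mu> u (G \<inter> E) / wmeas \<mu> u E) powr (1 / s)"

definition rh_ineq :: "('a \<Rightarrow> 'a \<Rightarrow> real) \<Rightarrow> 'a measure \<Rightarrow> real \<Rightarrow> real \<Rightarrow> ('a \<Rightarrow> real) \<Rightarrow> real \<Rightarrow> bool" where
  "rh_ineq d \<mu> cd q w C \<longleftrightarrow> (\<forall>x \<rho>. \<rho> > 0 \<longrightarrow>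
     (avg \<mu> (\<lambda>y. w y powr q) (qball d x \<rho>)) powr (1 / q) \<le> C * avg \<mu> w (qball d x (cd * \<rho>)))"

definition in_RH :: "('a \<Rightarrow> 'a \<Rightarrow> real) \<Rightarrow> 'a measure \<Rightarrow> real \<Rightarrow> real \<Rightarrow> ('a \<Rightarrow> real) \<Rightarrow> bool" where
  "in_RH d \<mu> cd q w \<longleftrightarrow> weight d \<mu> w \<and> loc_int d \<mu> (\<lambda>y. w y powr q) \<and> (\<exists>C. rh_ineq d \<mu> cd q w C)"

definition rh_const :: "('a \<Rightarrow> 'a \<Rightarrow> real) \<Rightarrow> 'a measure \<Rightarrow> real \<Rightarrow> real \<Rightarrow> ('a \<Rightarrow> real) \<Rightarrow> real" where
  "rh_const d \<mu> cd q w = Inf {C. 0 \<le> C \<and> rh_ineq d \<mu> cd q w C}"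

section \<open>A_infinity (Fujii--Wilson constant over balls)\<close>

definition maxfun :: "('a \<Rightarrow> 'a \<Rightarrow> real) \<Rightarrow> 'a measure \<Rightarrow> ('a \<Rightarrow> real) \<Rightarrow> 'a \<Rightarrow> ennreal" where
  "maxfun d \<mu> f x = (SUP p\<in>{(z, \<rho>). \<rho> > 0 \<and> x \<in> qball d z \<rho>}.
      (\<integral>\<^sup>+ y\<in>qball d (fst p) (snd p). ennreal \<bar>f y\<bar> \<partial>\<mu>) / emeasure \<mu> (qball d (fst p) (snd p)))"

definition ainf_const_enn :: "('a \<Rightarrow> 'a \<Rightarrow> real) \<Rightarrow> 'a measure \<Rightarrow> ('a \<Rightarrow> real) \<Rightarrow> ennreal" where
  "ainf_const_enn d \<mu> w = (SUP p\<in>{(x, \<rho>). \<rho> > 0}.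
      (\<integral>\<^sup>+ y\<in>qball d (fst p) (snd p).
          maxfun d \<mu> (\<lambda>v. indicator (qball d (fst p) (snd p)) v * w v) y \<partial>\<mu>)
      / (\<integral>\<^sup>+ y\<in>qball d (fst p) (snd p). ennreal (w y) \<partial>\<mu>))"

definition in_Ainf :: "('a \<Rightarrow> 'a \<Rightarrow> real) \<Rightarrow> 'a measure \<Rightarrow> ('a \<Rightarrow> real) \<Rightarrow> bool" where
  "in_Ainf d \<mu> w \<longleftrightarrow> weight d \<mu> w \<and> ainf_const_enn d \<mu> w < \<infinity>"

definition ainf_const :: "('a \<Rightarrow> 'a \<Rightarrow> real) \<Rightarrow> 'a measure \<Rightarrow> ('a \<Rightarrow> real) \<Rightarrow> real" where
  "ainf_const d \<mu> w = enn2real (ainf_const_enn d \<mu> w)"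

definition sharp_RH :: "('a \<Rightarrow> 'a \<Rightarrow> real) \<Rightarrow> 'a measure \<Rightarrow> real \<Rightarrow> real \<Rightarrow> bool" where
  "sharp_RH d \<mu> cd \<tau> \<longleftrightarrow> 0 < \<tau> \<and> (\<exists>C. \<forall>w. in_Ainf d \<mu> w \<longrightarrow>
     (let p = 1 + 1 / (\<tau> * ainf_const d \<mu> w) in
       loc_int d \<mu> (\<lambda>y. w y powr p) \<and>
       (\<forall>x \<rho>. \<rho> > 0 \<longrightarrow>
          (avg \<mu> (\<lambda>y. w y powr p) (qball d x \<rho>)) powr (1 / p) \<le> C * avg \<mu> w (qball d x (cd * \<rho>)))))"

definition young_function :: "(real \<Rightarrow> real) \<Rightarrow> bool" where
  "young_function A \<longleftrightarrow> A 0 = 0 \<and> (\<forall>t\<ge>0. 0 \<le> A t) \<and> convex_on {0..} A \<and>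
     mono_on {0..} A \<and> filterlim A at_top at_top"

text \<open>||g||_{A,E} = inf {lambda > 0 : (1/mu(E)) int_E A(|g|/lambda) \<le> 1} (value \<infinity> if empty)\<close>
definition orlicz_norm :: "'a measure \<Rightarrow> (real \<Rightarrow> real) \<Rightarrow> ('a \<Rightarrow> real) \<Rightarrow> 'a set \<Rightarrow> ennreal" where
  "orlicz_norm \<mu> A g E = (INF lam\<in>{lam::real. 0 < lam \<and>
       (\<integral>\<^sup>+ x\<in>E. ennreal (A (\<bar>g x\<bar> / lam)) \<partial>\<mu>) \<le> emeasure \<mu> E}. ennreal lam)"

definition B_cond :: "(real \<Rightarrow> real) \<Rightarrow> real \<Rightarrow> bool" where
  "B_cond A \<rho> \<longleftrightarrow> (\<integral>\<^sup>+ t\<in>{1..}. ennreal (A t * t powr (- \<rho>) / t) \<partial>lborel) < \<infinity>"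

text \<open>kappa(eps): constants with A(t) \<le> kappa(eps) t^(r(1+eps)) for t \<ge> 1
  (the paper's absolute c absorbed; normalised kappa \<ge> 1).\<close>
definition kappa_fun :: "(real \<Rightarrow> real) \<Rightarrow> real \<Rightarrow> (real \<Rightarrow> real) \<Rightarrow> bool" where
  "kappa_fun A r \<kappa> \<longleftrightarrow> (\<forall>\<epsilon>>0. 1 \<le> \<kappa> \<epsilon> \<and> (\<forall>t\<ge>1. A t \<le> \<kappa> \<epsilon> * t powr (r * (1 + \<epsilon>))))"

end

theory Submission
  imports Defs
begin

(*
  Let B_i be the ball of radius cd^i C0 delta^k about the centre of Q, g = chi_G u,
  p = r (1 + eps) and D the doubling constant for the dilation by cd.

  The growth bound A t <= kappa t^p bounds the Luxemburg norm of g on B_0 by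
  2 kappa <g^p>^(1/p). Hoelder's inequality interpolates this L^p average between
  <g>_{B_0}, with weight theta = 1/(4p) = 1/s, and the L^m average of u, m = (4p - 1)/3.
  By doubling, <g>_{B_0} <= D (u(G \<inter> B_1) / u(B_1)) <u>_{B_1}, which produces the
  factor <chi_G>^u_{B_1,s}. The exponent m is at most q or at most r (1 + 2 eps), the
  exponent of the sharp reverse Hoelder inequality for u^r, so the L^m average of u on
  B_0 is controlled through RH_q by an average of u on B_1 or B_2. Finally consecutive
  averages satisfy <u>_{B_i} <= min D [u]_{RH_q} <u>_{B_(i+1)}: comparing them by doubling
  when [u]_{RH_q} >= 1 and by RH_q otherwise absorbs every power of [u]_{RH_q} into
  [u]_{RH_q}^(1 + q/(4r)).
*)

section \<open>Hoelder's inequality and power means\<close>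

lemma Holder_inequality:
  fixes f g :: "'a \<Rightarrow> real"
  assumes ab: "a > 1" "b > 1" "1/a + 1/b = 1"
    and [measurable]: "f \<in> borel_measurable M" "g \<in> borel_measurable M"
    and f0: "\<And>x. 0 \<le> f x" and g0: "\<And>x. 0 \<le> g x"
    and fi: "integrable M (\<lambda>x. f x powr a)" and gi: "integrable M (\<lambda>x. g x powr b)"
  shows "integrable M (\<lambda>x. f x * g x)"
    and "(\<integral>x. f x * g x \<partial>M) \<le> (\<integral>x. f x powr a \<partial>M) powr (1/a) * (\<integral>x. g x powr b \<partial>M) powr (1/b)"
proof -
  show int: "integrable M (\<lambda>x. f x * g x)"
  proof (rule Bochner_Integration.integrable_bound)
    show "integrable M (\<lambda>x. f x powr a / a + g x powr b / b)"
      using fi gi by auto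
    show "AE x in M. norm (f x * g x) \<le> norm (f x powr a / a + g x powr b / b)"
    proof (intro AE_I2)
      fix x
      have "f x * g x \<le> f x powr a / a + g x powr b / b"
        using Youngs_inequality[OF ab f0 g0] .
      then show "norm (f x * g x) \<le> norm (f x powr a / a + g x powr b / b)"
        using f0[of x] g0[of x] by simp
    qed
  qed simp
  define F where "F = (\<integral>x. f x powr a \<partial>M)"
  define G where "G = (\<integral>x. g x powr b \<partial>M)"
  have "F \<ge> 0" "G \<ge> 0"
    unfolding F_def G_def by (auto intro: integral_nonneg_AE)
  show "(\<integral>x. f x * g x \<partial>M) \<le> F powr (1/a) * G powr (1/b)"
  proof (cases "F = 0 \<or> G = 0")
    case True
    then have "AE x in M. f x powr a = 0 \<or> g x powr b = 0"
      using integral_nonneg_eq_0_iff_AE[OF fi] integral_nonneg_eq_0_iff_AE[OF gi]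
      by (auto simp: F_def G_def)
    then have "AE x in M. f x * g x = 0"
      by eventually_elim auto
    then show ?thesis
      by (simp add: integral_eq_zero_AE)
  next
    case False
    with \<open>F \<ge> 0\<close> \<open>G \<ge> 0\<close> have "F > 0" "G > 0" by auto
    define cF where "cF = F powr (1/a)"
    define cG where "cG = G powr (1/b)"
    have "cF > 0" "cG > 0" "cF powr a = F" "cG powr b = G"
      using \<open>F > 0\<close> \<open>G > 0\<close> ab by (auto simp: cF_def cG_def powr_powr)
    have pointwise: "f x * g x \<le> cF * cG * (f x powr a / (a * F) + g x powr b / (b * G))" for x
    proof -
      have "(f x / cF) * (g x / cG) \<le> (f x / cF) powr a / a + (g x / cG) powr b / b"
        using \<open>cF > 0\<close> \<open>cG > 0\<close> f0 g0 by (intro Youngs_inequality[OF ab]) auto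
      also have "\<dots> = f x powr a / (a * F) + g x powr b / (b * G)"
        using f0[of x] g0[of x] \<open>cF > 0\<close> \<open>cG > 0\<close> \<open>cF powr a = F\<close> \<open>cG powr b = G\<close>
        by (simp add: powr_divide mult.commute)
      finally show ?thesis
        using \<open>cF > 0\<close> \<open>cG > 0\<close> by (simp add: field_simps)
    qed
    have "(\<integral>x. f x * g x \<partial>M) \<le> (\<integral>x. cF * cG * (f x powr a / (a * F) + g x powr b / (b * G)) \<partial>M)"
      using fi gi pointwise by (intro integral_mono[OF int]) auto
    also have "\<dots> = cF * cG * (F / (a * F) + G / (b * G))"
      using fi gi by (simp add: F_def G_def)
    also have "\<dots> = cF * cG"
      using \<open>F > 0\<close> \<open>G > 0\<close> ab by (simp add: field_simps)
    finally show ?thesis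
      by (simp add: cF_def cG_def)
  qed
qed

lemma (in finite_measure) integrable_powr_smaller_exponent:
  fixes f :: "'a \<Rightarrow> real"
  assumes "0 < a" "a \<le> b" and [measurable]: "f \<in> borel_measurable M"
    and f0: "\<And>x. 0 \<le> f x" and fi: "integrable M (\<lambda>x. f x powr b)"
  shows "integrable M (\<lambda>x. f x powr a)"
proof (rule Bochner_Integration.integrable_bound)
  show "integrable M (\<lambda>x. 1 + f x powr b)"
    using fi by simp
  have "f x powr a \<le> 1 + f x powr b" for x
  proof (cases "f x \<le> 1")
    case True
    then have "f x powr a \<le> 1"
      using f0[of x] \<open>0 < a\<close> by (intro powr_le1) auto
    then show ?thesis
      using powr_ge_zero[of "f x" b] by linarith
  next
    case False
    then have "f x powr a \<le> f x powr b"
      using \<open>a \<le> b\<close> by (intro powr_mono) auto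
    then show ?thesis by simp
  qed
  then show "AE x in M. norm (f x powr a) \<le> norm (1 + f x powr b)"
    by (intro AE_I2) simp
qed simp

lemma (in finite_measure) power_mean_mono:
  fixes f :: "'a \<Rightarrow> real"
  assumes pos: "0 < measure M (space M)" and ab: "0 < a" "a \<le> b"
    and [measurable]: "f \<in> borel_measurable M"
    and f0: "\<And>x. 0 \<le> f x" and fi: "integrable M (\<lambda>x. f x powr b)"
  shows "((\<integral>x. f x powr a \<partial>M) / measure M (space M)) powr (1/a)
         \<le> ((\<integral>x. f x powr b \<partial>M) / measure M (space M)) powr (1/b)"
proof (cases "a = b")
  case False
  with ab have "a < b" by simp
  define m where "m = measure M (space M)"
  define I where "I = (\<integral>x. f x powr b \<partial>M)"
  have "I \<ge> 0"
    unfolding I_def by (intro integral_nonneg_AE) auto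
  have "(\<integral>x. f x powr a * 1 \<partial>M)
        \<le> (\<integral>x. (f x powr a) powr (b/a) \<partial>M) powr (1/(b/a)) * (\<integral>x. 1 powr (b/(b-a)) \<partial>M) powr (1/(b/(b-a)))"
    using ab \<open>a < b\<close> fi by (intro Holder_inequality(2)) (auto simp: field_simps powr_powr)
  also have "\<dots> = I powr (a/b) * m powr (1 - a/b)"
    using ab \<open>a < b\<close> by (simp add: powr_powr I_def m_def diff_divide_distrib)
  also have "\<dots> = (I / m) powr (a/b) * m"
    using pos \<open>I \<ge> 0\<close> by (simp add: m_def powr_divide powr_diff field_simps)
  finally have "(\<integral>x. f x powr a \<partial>M) / m \<le> (I / m) powr (a / b)"
    using pos by (simp add: m_def divide_le_eq mult.commute)
  then have "((\<integral>x. f x powr a \<partial>M) / m) powr (1/a) \<le> ((I / m) powr (a / b)) powr (1/a)"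
    using pos ab by (intro powr_mono2 divide_nonneg_nonneg integral_nonneg_AE) (auto simp: m_def)
  also have "\<dots> = (I / m) powr (1/b)"
    using ab by (simp add: powr_powr)
  finally show ?thesis
    by (simp add: I_def m_def)
qed simp

lemma set_integrable_iff_restrict_space:
  fixes h :: "'a \<Rightarrow> real"
  shows "B \<in> sets M \<Longrightarrow> integrable (restrict_space M B) h \<longleftrightarrow> set_integrable M B h"
  unfolding set_integrable_def by (intro integrable_restrict_space) auto

lemma set_integral_eq_restrict_space:
  fixes h :: "'a \<Rightarrow> real"
  shows "B \<in> sets M \<Longrightarrow> integral\<^sup>L (restrict_space M B) h = (LINT x:B|M. h x)"
  unfolding set_lebesgue_integral_def by (intro integral_restrict_space) auto

lemma set_integral_nonneg:
  fixes f :: "'a \<Rightarrow> real"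
  shows "(\<And>x. 0 \<le> f x) \<Longrightarrow> 0 \<le> (LINT x:B|M. f x)"
  unfolding set_lebesgue_integral_def by (intro integral_nonneg_AE) (auto simp: indicator_def)

lemma avg_nonneg: "(\<And>x. 0 \<le> f x) \<Longrightarrow> 0 \<le> avg M f B"
  by (simp add: avg_def wmeas_def set_integral_nonneg)

lemma finite_measure_restrict_space:
  "B \<in> sets M \<Longrightarrow> emeasure M B < \<infinity> \<Longrightarrow> finite_measure (restrict_space M B)"
  by (intro finite_measureI) (simp add: space_restrict_space2 emeasure_restrict_space sets.Int_space_eq2)

context
  fixes M :: "'a measure" and B :: "'a set" and f :: "'a \<Rightarrow> real"
  assumes B: "B \<in> sets M" "emeasure M B < \<infinity>"
    and fm: "f \<in> borel_measurable M" and f0: "\<And>x. 0 \<le> f x"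
begin

lemma set_integrable_powr_smaller_exponent:
  assumes "0 < a" "a \<le> b" "set_integrable M B (\<lambda>x. f x powr b)"
  shows "set_integrable M B (\<lambda>x. f x powr a)"
  using finite_measure.integrable_powr_smaller_exponent[OF finite_measure_restrict_space[OF B], of a b f]
    assms f0 measurable_restrict_space1[OF fm]
  by (simp add: set_integrable_iff_restrict_space[OF B(1)])

lemma avg_power_mean_mono:
  assumes "0 < measure M B" "0 < a" "a \<le> b" "set_integrable M B (\<lambda>x. f x powr b)"
  shows "(avg M (\<lambda>x. f x powr a) B) powr (1/a) \<le> (avg M (\<lambda>x. f x powr b) B) powr (1/b)"
  using finite_measure.power_mean_mono[OF finite_measure_restrict_space[OF B], of a b f]
    assms f0 measurable_restrict_space1[OF fm] B
  by (simp add: avg_def wmeas_def space_restrict_space2 measure_restrict_space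
      set_integrable_iff_restrict_space set_integral_eq_restrict_space)

end

lemma set_Holder_inequality:
  fixes f g :: "'a \<Rightarrow> real"
  assumes "B \<in> sets M" and ab: "a > 1" "b > 1" "1/a + 1/b = 1"
    and fm: "f \<in> borel_measurable M" and gm: "g \<in> borel_measurable M"
    and f0: "\<And>x. 0 \<le> f x" and g0: "\<And>x. 0 \<le> g x"
    and "set_integrable M B (\<lambda>x. f x powr a)" "set_integrable M B (\<lambda>x. g x powr b)"
  shows "(LINT x:B|M. f x * g x) \<le> (LINT x:B|M. f x powr a) powr (1/a) * (LINT x:B|M. g x powr b) powr (1/b)"
  using Holder_inequality(2)[OF ab measurable_restrict_space1[OF fm, of B] measurable_restrict_space1[OF gm, of B] f0 g0]
    assms
  by (simp add: set_integrable_iff_restrict_space set_integral_eq_restrict_space)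

lemma set_integral_mono_set:
  fixes f :: "'a \<Rightarrow> real"
  assumes "E \<in> sets M" "E \<subseteq> F" "\<And>x. 0 \<le> f x" "set_integrable M F f"
  shows "(LINT x:E|M. f x) \<le> (LINT x:F|M. f x)"
  using assms set_integrable_subset[OF assms(4,1,2)]
  unfolding set_lebesgue_integral_def set_integrable_def
  by (intro integral_mono) (auto split: split_indicator)

(* Hoelder with the exponents 4 and 4/3 for g^p = g^(1/4) * g^(p - 1/4); this is where m = (4p - 1)/3 comes from. *)
lemma avg_powr_le_interpolation:
  fixes g :: "'a \<Rightarrow> real"
  assumes B: "B \<in> sets M" "emeasure M B < \<infinity>" "0 < measure M B"
    and g_meas: "g \<in> borel_measurable M" and g0: "\<And>x. 0 \<le> g x"
    and "1 \<le> p" and m_def: "m = (4 * p - 1) / 3"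
    and gm: "set_integrable M B (\<lambda>x. g x powr m)"
  shows "(avg M (\<lambda>x. g x powr p) B) powr (1/p)
     \<le> (avg M g B) powr (1/(4*p)) * ((avg M (\<lambda>x. g x powr m) B) powr (1/m)) powr (1 - 1/(4*p))"
proof -
  note g_meas[measurable]
  have "1 \<le> m"
    using \<open>1 \<le> p\<close> by (simp add: m_def)
  have gi: "set_integrable M B g"
    using set_integrable_powr_smaller_exponent[OF B(1,2) g_meas g0, of 1 m] gm \<open>1 \<le> m\<close>
    by (simp add: abs_of_nonneg g0)
  define mB where "mB = measure M B"
  define Ig where "Ig = (LINT x:B|M. g x)"
  define Igm where "Igm = (LINT x:B|M. g x powr m)"
  define Igp where "Igp = (LINT x:B|M. g x powr p)"
  have "0 < mB" "0 \<le> Ig" "0 \<le> Igm" "0 \<le> Igp"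
    using B g0 by (auto simp: mB_def Ig_def Igm_def Igp_def set_integral_nonneg)
  have pow4: "(g x powr (1/4)) powr 4 = g x" for x
    using g0[of x] by (simp add: powr_powr)
  have "(p - 1/4) * (4/3) = m"
    by (simp add: m_def field_simps)
  then have pow43: "(g x powr (p - 1/4)) powr (4/3) = g x powr m" for x
    by (simp add: powr_powr)
  have "(LINT x:B|M. g x powr (1/4) * g x powr (p - 1/4))
      \<le> (LINT x:B|M. (g x powr (1/4)) powr 4) powr (1/4)
        * (LINT x:B|M. (g x powr (p - 1/4)) powr (4/3)) powr (1/(4/3))"
  proof (rule set_Holder_inequality)
    show "(\<lambda>x. g x powr (1/4)) \<in> borel_measurable M" "(\<lambda>x. g x powr (p - 1/4)) \<in> borel_measurable M"
      by measurable
  qed (use B gi gm in \<open>simp_all add: pow4 pow43\<close>)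
  then have "Igp \<le> Ig powr (1/4) * Igm powr (3/4)"
    by (simp add: Igp_def Ig_def Igm_def pow4 pow43 flip: powr_add)
  then have "Igp / mB \<le> (Ig powr (1/4) * Igm powr (3/4)) / mB"
    using \<open>0 < mB\<close> by (simp add: divide_right_mono)
  also have "\<dots> = (Ig / mB) powr (1/4) * (Igm / mB) powr (3/4)"
  proof -
    have "mB powr (1/4) * mB powr (3/4) = mB"
      using \<open>0 < mB\<close> by (simp flip: powr_add)
    then show ?thesis
      using \<open>0 < mB\<close> \<open>0 \<le> Ig\<close> \<open>0 \<le> Igm\<close> by (simp add: powr_divide field_simps)
  qed
  finally have "(Igp / mB) powr (1/p) \<le> ((Ig / mB) powr (1/4) * (Igm / mB) powr (3/4)) powr (1/p)"
    using \<open>0 \<le> Igp\<close> \<open>0 < mB\<close> \<open>1 \<le> p\<close> by (intro powr_mono2) auto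
  also have "\<dots> = (Ig / mB) powr (1/(4*p)) * ((Igm / mB) powr (1/m)) powr (1 - 1/(4*p))"
  proof -
    have "1/m * (1 - 1/(4*p)) = 3/(4*p)"
      using \<open>1 \<le> p\<close> by (simp add: m_def field_simps)
    then show ?thesis
      using \<open>0 \<le> Ig\<close> \<open>0 \<le> Igm\<close> \<open>0 < mB\<close> by (simp add: powr_mult powr_powr)
  qed
  finally show ?thesis
    by (simp add: avg_def wmeas_def Igp_def Ig_def Igm_def mB_def)
qed

lemma avg_indicator_mult:
  fixes u :: "'a \<Rightarrow> real"
  assumes "G \<in> sets M" "E \<in> sets M" "\<And>x. 0 \<le> u x" "set_integrable M E u"
  shows "avg M (\<lambda>x. indicator G x * u x) E = wmeas M u (G \<inter> E) / wmeas M u E * avg M u E"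
proof -
  have "wmeas M (\<lambda>x. indicator G x * u x) E = wmeas M u (G \<inter> E)"
    unfolding wmeas_def set_lebesgue_integral_def
    by (intro Bochner_Integration.integral_cong) (auto split: split_indicator)
  moreover have "0 \<le> wmeas M u (G \<inter> E)" "wmeas M u (G \<inter> E) \<le> wmeas M u E"
    using assms by (auto simp: wmeas_def set_integral_nonneg intro: set_integral_mono_set)
  ultimately show ?thesis
    by (cases "wmeas M u E = 0") (simp_all add: avg_def)
qed

section \<open>Luxemburg norms\<close>

lemma young_function_le_linear:
  assumes "young_function A" "0 \<le> t" "t \<le> 1"
  shows "A t \<le> t * A 1"
proof -
  have "A ((1 - t) *\<^sub>R 0 + t *\<^sub>R 1) \<le> (1 - t) * A 0 + t * A 1"
    using assms by (intro convex_onD[of "{0..}"]) (auto simp: young_function_def)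
  then show ?thesis
    using assms by (simp add: young_function_def)
qed

lemma young_function_le_linear_plus_powr:
  assumes A: "young_function A" and growth: "\<forall>t\<ge>1. A t \<le> \<kappa> * t powr p" and "0 \<le> t"
  shows "A t \<le> \<kappa> * t + \<kappa> * t powr p"
proof -
  have "0 \<le> A 1" "A 1 \<le> \<kappa>"
    using A growth by (auto simp: young_function_def)
  then have "0 \<le> \<kappa>" by linarith
  show ?thesis
  proof (cases "t \<le> 1")
    case True
    have "A t \<le> t * A 1"
      using young_function_le_linear[OF A \<open>0 \<le> t\<close> True] .
    also have "\<dots> \<le> \<kappa> * t"
      using mult_left_mono[OF \<open>A 1 \<le> \<kappa>\<close> \<open>0 \<le> t\<close>] by (simp add: mult.commute)
    finally show ?thesis
      using \<open>0 \<le> \<kappa>\<close> by (simp add: add_increasing2)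
  next
    case False
    then show ?thesis
      using growth \<open>0 \<le> t\<close> \<open>0 \<le> \<kappa>\<close> by (simp add: add_increasing)
  qed
qed

lemma orlicz_norm_le:
  assumes "0 < lam" "(\<integral>\<^sup>+ x\<in>B. ennreal (A (\<bar>g x\<bar> / lam)) \<partial>M) \<le> emeasure M B"
  shows "orlicz_norm M A g B \<le> ennreal lam"
  unfolding orlicz_norm_def using assms by (intro INF_lower) auto

lemma orlicz_norm_eq_0:
  assumes A: "young_function A" and zero: "AE x in M. x \<in> B \<longrightarrow> g x = 0"
  shows "orlicz_norm M A g B = 0"
proof -
  have "A 0 = 0"
    using A by (simp add: young_function_def)
  have small: "orlicz_norm M A g B \<le> ennreal lam" if "0 < lam" for lam
  proof (rule orlicz_norm_le[OF that])
    have "(\<integral>\<^sup>+ x\<in>B. ennreal (A (\<bar>g x\<bar> / lam)) \<partial>M) = (\<integral>\<^sup>+ x. 0 \<partial>M)"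
      using zero by (rule nn_integral_cong_AE[OF AE_mp]) (auto simp: \<open>A 0 = 0\<close> split: split_indicator)
    then show "(\<integral>\<^sup>+ x\<in>B. ennreal (A (\<bar>g x\<bar> / lam)) \<partial>M) \<le> emeasure M B"
      by simp
  qed
  have "orlicz_norm M A g B \<le> 0"
    by (rule ennreal_le_epsilon) (use small in auto)
  then show ?thesis by simp
qed

lemma set_integral_eq_0_imp_AE:
  fixes f :: "'a \<Rightarrow> real"
  assumes "set_integrable M B f" "\<And>x. 0 \<le> f x" "(LINT x:B|M. f x) = 0"
  shows "AE x in M. x \<in> B \<longrightarrow> f x = 0"
proof -
  have "AE x in M. indicator B x *\<^sub>R f x = 0"
    using assms integral_nonneg_eq_0_iff_AE[of M "\<lambda>x. indicator B x *\<^sub>R f x"]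
    by (simp add: set_integrable_def set_lebesgue_integral_def)
  then show ?thesis
    by eventually_elim (auto simp: indicator_def)
qed

lemma set_nn_integral_eq_set_integral:
  fixes f :: "'a \<Rightarrow> real"
  assumes "set_integrable M B f" "\<And>x. 0 \<le> f x"
  shows "(\<integral>\<^sup>+ x\<in>B. ennreal (f x) \<partial>M) = ennreal (LINT x:B|M. f x)"
  unfolding set_lebesgue_integral_def nn_integral_set_ennreal using assms
  by (subst nn_integral_eq_integral) (simp_all add: mult.commute set_integrable_def)

lemma nn_set_integral_young_le:
  fixes g :: "'a \<Rightarrow> real"
  assumes A: "young_function A" and growth: "\<forall>t\<ge>1. A t \<le> \<kappa> * t powr p" and "0 \<le> \<kappa>" "0 < lam"
    and g0: "\<And>x. 0 \<le> g x" and gi: "set_integrable M B g" and gp: "set_integrable M B (\<lambda>x. g x powr p)"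
  shows "(\<integral>\<^sup>+ x\<in>B. ennreal (A (\<bar>g x\<bar> / lam)) \<partial>M)
    \<le> ennreal (\<kappa> / lam * (LINT x:B|M. g x) + \<kappa> / lam powr p * (LINT x:B|M. g x powr p))"
proof -
  have "(\<integral>\<^sup>+ x\<in>B. ennreal (A (\<bar>g x\<bar> / lam)) \<partial>M)
      \<le> (\<integral>\<^sup>+ x\<in>B. ennreal (\<kappa> / lam * g x + \<kappa> / lam powr p * g x powr p) \<partial>M)"
  proof (intro nn_integral_mono mult_right_mono ennreal_leI)
    fix x
    show "A (\<bar>g x\<bar> / lam) \<le> \<kappa> / lam * g x + \<kappa> / lam powr p * g x powr p"
      using young_function_le_linear_plus_powr[OF A growth, of "g x / lam"] g0[of x] \<open>0 < lam\<close>
      by (simp add: powr_divide)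
  qed simp
  also have "\<dots> = ennreal (\<kappa> / lam * (LINT x:B|M. g x) + \<kappa> / lam powr p * (LINT x:B|M. g x powr p))"
    using gi gp g0 \<open>0 < lam\<close> \<open>0 \<le> \<kappa>\<close>
    by (subst set_nn_integral_eq_set_integral) (auto intro: set_integral_add set_integrable_mult_right)
  finally show ?thesis .
qed

lemma orlicz_norm_le_power_mean:
  fixes g :: "'a \<Rightarrow> real"
  assumes B: "B \<in> sets M" "emeasure M B < \<infinity>" "0 < measure M B"
    and A: "young_function A" and "1 \<le> \<kappa>" "1 \<le> p" and growth: "\<forall>t\<ge>1. A t \<le> \<kappa> * t powr p"
    and g_meas: "g \<in> borel_measurable M" and g0: "\<And>x. 0 \<le> g x"
    and gp: "set_integrable M B (\<lambda>x. g x powr p)"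
  shows "orlicz_norm M A g B \<le> ennreal (2 * \<kappa> * (avg M (\<lambda>x. g x powr p) B) powr (1/p))"
proof -
  define H where "H = avg M (\<lambda>x. g x powr p) B"
  define m where "m = measure M B"
  have int_gp: "(LINT x:B|M. g x powr p) = m * H"
    using B by (simp add: H_def avg_def wmeas_def m_def)
  have "0 \<le> H"
    by (simp add: H_def avg_nonneg)
  show ?thesis
  proof (cases "H = 0")
    case True
    then have "AE x in M. x \<in> B \<longrightarrow> g x powr p = 0"
      using int_gp by (intro set_integral_eq_0_imp_AE[OF gp]) auto
    then have "AE x in M. x \<in> B \<longrightarrow> g x = 0"
      by eventually_elim simp
    then show ?thesis
      by (simp add: orlicz_norm_eq_0[OF A])
  next
    case False
    with \<open>0 \<le> H\<close> have "0 < H" by simp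
    define lam where "lam = 2 * \<kappa> * H powr (1/p)"
    have "0 < lam"
      using \<open>0 < H\<close> \<open>1 \<le> \<kappa>\<close> by (simp add: lam_def)
    have gi: "set_integrable M B g"
      using set_integrable_powr_smaller_exponent[OF B(1,2) g_meas g0, of 1 p] gp \<open>1 \<le> p\<close>
      by (simp add: abs_of_nonneg g0)
    have "avg M g B \<le> H powr (1/p)"
      using avg_power_mean_mono[OF B(1,2) g_meas g0 B(3), of 1 p] gp \<open>1 \<le> p\<close>
      by (simp add: abs_of_nonneg g0 H_def)
    then have int_g: "(LINT x:B|M. g x) \<le> m * H powr (1/p)"
      using B by (simp add: avg_def wmeas_def m_def divide_le_eq mult.commute)
    have linear_part: "\<kappa> / lam * (LINT x:B|M. g x) \<le> m / 2"
    proof -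
      have "\<kappa> / lam * (LINT x:B|M. g x) \<le> \<kappa> / lam * (m * H powr (1/p))"
        using int_g \<open>1 \<le> \<kappa>\<close> \<open>0 < lam\<close> by (intro mult_left_mono) auto
      also have "\<dots> = m / 2"
        using \<open>1 \<le> \<kappa>\<close> \<open>0 < H\<close> by (simp add: lam_def field_simps)
      finally show ?thesis .
    qed
    have power_part: "\<kappa> / lam powr p * (LINT x:B|M. g x powr p) \<le> m / 2"
    proof -
      have "lam powr p = (2 * \<kappa>) powr p * H"
        using \<open>0 < H\<close> \<open>1 \<le> \<kappa>\<close> \<open>1 \<le> p\<close> by (simp add: lam_def powr_mult powr_powr)
      moreover have "2 * \<kappa> \<le> (2 * \<kappa>) powr p"
        using powr_mono[OF \<open>1 \<le> p\<close>, of "2 * \<kappa>"] \<open>1 \<le> \<kappa>\<close> by simp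
      ultimately show ?thesis
        using \<open>0 < H\<close> \<open>1 \<le> \<kappa>\<close> B(3) by (simp add: int_gp m_def field_simps)
    qed
    have "(\<integral>\<^sup>+ x\<in>B. ennreal (A (\<bar>g x\<bar> / lam)) \<partial>M)
        \<le> ennreal (\<kappa> / lam * (LINT x:B|M. g x) + \<kappa> / lam powr p * (LINT x:B|M. g x powr p))"
      using \<open>1 \<le> \<kappa>\<close> by (intro nn_set_integral_young_le[OF A growth _ \<open>0 < lam\<close> g0 gi gp]) simp
    also have "\<dots> \<le> ennreal m"
      using linear_part power_part by (intro ennreal_leI) linarith
    also have "\<dots> = emeasure M B"
      using B by (simp add: emeasure_eq_ennreal_measure m_def)
    finally show ?thesis
      using orlicz_norm_le[OF \<open>0 < lam\<close>] by (simp add: lam_def H_def)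
  qed
qed

lemma orlicz_norm_le_interpolation:
  fixes g u :: "'a \<Rightarrow> real"
  assumes B: "B \<in> sets M" "emeasure M B < \<infinity>" "0 < measure M B"
    and A: "young_function A" and "1 \<le> \<kappa>" "1 \<le> p" and growth: "\<forall>t\<ge>1. A t \<le> \<kappa> * t powr p"
    and g_meas [measurable]: "g \<in> borel_measurable M" and u_meas [measurable]: "u \<in> borel_measurable M"
    and g0: "\<And>x. 0 \<le> g x" and g_le_u: "\<And>x. g x \<le> u x"
    and m_def: "m = (4 * p - 1) / 3" and um: "set_integrable M B (\<lambda>x. u x powr m)"
  shows "orlicz_norm M A g B
    \<le> ennreal (2 * \<kappa> * ((avg M g B) powr (1/(4*p)) * ((avg M (\<lambda>x. u x powr m) B) powr (1/m)) powr (1 - 1/(4*p))))"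
proof -
  have "1 \<le> m"
    using \<open>1 \<le> p\<close> by (simp add: m_def)
  have powr_le: "g x powr c \<le> u x powr c" if "0 \<le> c" for x c
    using g0[of x] g_le_u[of x] that by (intro powr_mono2) auto
  have gm: "set_integrable M B (\<lambda>x. g x powr m)"
  proof (rule set_integrable_bound[OF um])
    show "set_borel_measurable M B (\<lambda>x. g x powr m)"
      unfolding set_borel_measurable_def using B(1) by measurable
    show "AE x in M. x \<in> B \<longrightarrow> norm (g x powr m) \<le> norm (u x powr m)"
      using powr_le \<open>1 \<le> m\<close> by (intro AE_I2) simp
  qed
  have gp: "set_integrable M B (\<lambda>x. g x powr p)"
    using set_integrable_powr_smaller_exponent[OF B(1,2) g_meas g0 _ _ gm] \<open>1 \<le> p\<close> by (simp add: m_def)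
  have "orlicz_norm M A g B \<le> ennreal (2 * \<kappa> * (avg M (\<lambda>x. g x powr p) B) powr (1/p))"
    by (rule orlicz_norm_le_power_mean[OF B A \<open>1 \<le> \<kappa>\<close> \<open>1 \<le> p\<close> growth g_meas g0 gp])
  also have "\<dots> \<le> ennreal (2 * \<kappa> * ((avg M g B) powr (1/(4*p)) * ((avg M (\<lambda>x. g x powr m) B) powr (1/m)) powr (1 - 1/(4*p))))"
    using avg_powr_le_interpolation[OF B g_meas g0 \<open>1 \<le> p\<close> m_def gm] \<open>1 \<le> \<kappa>\<close>
    by (intro ennreal_leI mult_left_mono) auto
  also have "\<dots> \<le> ennreal (2 * \<kappa> * ((avg M g B) powr (1/(4*p)) * ((avg M (\<lambda>x. u x powr m) B) powr (1/m)) powr (1 - 1/(4*p))))"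
  proof -
    have "avg M (\<lambda>x. g x powr m) B \<le> avg M (\<lambda>x. u x powr m) B"
      using B gm um powr_le \<open>1 \<le> m\<close> by (auto simp: avg_def wmeas_def intro!: divide_right_mono set_integral_mono)
    then show ?thesis
      using \<open>1 \<le> m\<close> \<open>1 \<le> p\<close> \<open>1 \<le> \<kappa>\<close>
      by (intro ennreal_leI mult_left_mono powr_mono2) (auto intro: avg_nonneg)
  qed
  finally show ?thesis .
qed

section \<open>Reverse Hoelder inequalities in spaces of homogeneous type\<close>

lemma qball_mono: "\<rho> \<le> \<rho>' \<Longrightarrow> qball d x \<rho> \<subseteq> qball d x \<rho>'"
  by (auto simp: qball_def)

lemma rh_ineq_mono:
  assumes "rh_ineq d \<mu> cd q w C" "C \<le> C'" "\<And>x. 0 \<le> w x"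
  shows "rh_ineq d \<mu> cd q w C'"
  using assms order_trans[OF _ mult_right_mono[OF \<open>C \<le> C'\<close> avg_nonneg]]
  unfolding rh_ineq_def by blast

lemma
  assumes "in_RH d \<mu> cd q u"
  shows rh_ineq_rh_const: "rh_ineq d \<mu> cd q u (rh_const d \<mu> cd q u)"
    and rh_const_nonneg: "0 \<le> rh_const d \<mu> cd q u"
proof -
  define S where "S = {C. 0 \<le> C \<and> rh_ineq d \<mu> cd q u C}"
  have u0: "\<And>x. 0 \<le> u x"
    using assms by (simp add: in_RH_def weight_def)
  obtain C where "rh_ineq d \<mu> cd q u C"
    using assms by (auto simp: in_RH_def)
  then have "max C 0 \<in> S"
    using rh_ineq_mono[of d \<mu> cd q u C "max C 0"] u0 by (simp add: S_def)
  then have "S \<noteq> {}"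
    by auto
  show "0 \<le> rh_const d \<mu> cd q u"
    unfolding rh_const_def S_def[symmetric] using \<open>S \<noteq> {}\<close>
    by (intro cInf_greatest) (auto simp: S_def)
  show "rh_ineq d \<mu> cd q u (rh_const d \<mu> cd q u)"
    unfolding rh_ineq_def
  proof (intro allI impI)
    fix x \<rho>
    assume "0 < (\<rho>::real)"
    define L where "L = (avg \<mu> (\<lambda>y. u y powr q) (qball d x \<rho>)) powr (1 / q)"
    define a where "a = avg \<mu> u (qball d x (cd * \<rho>))"
    have "0 \<le> a"
      unfolding a_def by (intro avg_nonneg u0)
    have admissible: "L \<le> C * a" if "C \<in> S" for C
      using that \<open>0 < \<rho>\<close> by (simp add: S_def rh_ineq_def L_def a_def)
    have "L \<le> Inf S * a"
    proof (cases "a = 0")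
      case True
      then show ?thesis
        using admissible[OF \<open>max C 0 \<in> S\<close>] by simp
    next
      case False
      with \<open>0 \<le> a\<close> have "0 < a" by simp
      then have "L / a \<le> Inf S"
        using \<open>S \<noteq> {}\<close> admissible by (intro cInf_greatest) (auto simp: divide_le_eq)
      then show ?thesis
        using \<open>0 < a\<close> by (simp add: divide_le_eq)
    qed
    then show "L \<le> rh_const d \<mu> cd q u * a"
      by (simp add: rh_const_def S_def)
  qed
qed

lemma maxfun_ge_avg:
  assumes "0 < \<rho>" "y \<in> qball d x \<rho>"
  shows "(\<integral>\<^sup>+ v\<in>qball d x \<rho>. ennreal \<bar>f v\<bar> \<partial>\<mu>) / emeasure \<mu> (qball d x \<rho>) \<le> maxfun d \<mu> f y"
  unfolding maxfun_def using assms
  by (intro SUP_upper2[of "(x, \<rho>)"]) auto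

locale space_of_homogeneous_type =
  fixes d :: "'a \<Rightarrow> 'a \<Rightarrow> real" and K :: real and \<mu> :: "'a measure"
  assumes homogeneous_space: "homogeneous_space d K \<mu>"
begin

lemma qball_sets [measurable]: "qball d x \<rho> \<in> sets \<mu>"
  using homogeneous_space by (simp add: homogeneous_space_def)

lemma emeasure_qball_finite: "0 < \<rho> \<Longrightarrow> emeasure \<mu> (qball d x \<rho>) < \<infinity>"
  using homogeneous_space by (simp add: homogeneous_space_def)

lemma emeasure_qball_pos: "0 < \<rho> \<Longrightarrow> 0 < emeasure \<mu> (qball d x \<rho>)"
  using homogeneous_space by (simp add: homogeneous_space_def)

lemma measure_qball_pos: "0 < \<rho> \<Longrightarrow> 0 < measure \<mu> (qball d x \<rho>)"
  using emeasure_qball_pos emeasure_qball_finite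
  by (simp add: emeasure_eq_ennreal_measure less_top[symmetric])

lemma emeasure_qball_eq: "0 < \<rho> \<Longrightarrow> emeasure \<mu> (qball d x \<rho>) = ennreal (measure \<mu> (qball d x \<rho>))"
  using emeasure_qball_finite[of \<rho> x] by (simp add: emeasure_eq_ennreal_measure less_top)

lemma measure_qball_mono:
  assumes "0 < \<rho>" "\<rho> \<le> \<rho>'"
  shows "measure \<mu> (qball d x \<rho>) \<le> measure \<mu> (qball d x \<rho>')"
  using assms emeasure_qball_finite[of \<rho>' x]
  by (intro measure_mono_fmeasurable qball_mono) (auto simp: fmeasurable_def)

lemma dilation_doubling:
  assumes "1 \<le> c"
  obtains D where "1 \<le> D" "\<And>x \<rho>. 0 < \<rho> \<Longrightarrow> measure \<mu> (qball d x (c * \<rho>)) \<le> D * measure \<mu> (qball d x \<rho>)"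
proof -
  obtain C where C: "\<And>x \<rho>. 0 < \<rho> \<Longrightarrow> emeasure \<mu> (qball d x (2 * \<rho>)) \<le> ennreal C * emeasure \<mu> (qball d x \<rho>)"
    using homogeneous_space unfolding homogeneous_space_def by blast
  define C' where "C' = max C 1"
  have "1 \<le> C'"
    by (simp add: C'_def)
  have double: "measure \<mu> (qball d x (2 * \<rho>)) \<le> C' * measure \<mu> (qball d x \<rho>)" if "0 < \<rho>" for x \<rho>
  proof -
    have "ennreal (measure \<mu> (qball d x (2 * \<rho>))) \<le> ennreal C * ennreal (measure \<mu> (qball d x \<rho>))"
      using C[OF that, of x] that by (simp add: emeasure_qball_eq)
    also have "\<dots> \<le> ennreal C' * ennreal (measure \<mu> (qball d x \<rho>))"
      by (intro mult_right_mono ennreal_leI) (simp_all add: C'_def)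
    also have "\<dots> = ennreal (C' * measure \<mu> (qball d x \<rho>))"
      using \<open>1 \<le> C'\<close> by (simp add: ennreal_mult)
    finally show ?thesis
      using \<open>1 \<le> C'\<close> by (simp add: ennreal_le_iff)
  qed
  have iterate: "measure \<mu> (qball d x (2^n * \<rho>)) \<le> C'^n * measure \<mu> (qball d x \<rho>)" if "0 < \<rho>" for x \<rho> n
  proof (induction n)
    case (Suc n)
    have "measure \<mu> (qball d x (2^Suc n * \<rho>)) \<le> C' * measure \<mu> (qball d x (2^n * \<rho>))"
      using double[of "2^n * \<rho>" x] that by (simp add: mult.assoc)
    also have "\<dots> \<le> C'^Suc n * measure \<mu> (qball d x \<rho>)"
      using Suc \<open>1 \<le> C'\<close> by (simp add: mult.assoc mult_left_mono)
    finally show ?case .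
  qed simp
  obtain n where "c < 2^n"
    using real_arch_pow[of 2 c] by auto
  show ?thesis
  proof (rule that[of "C'^n"])
    show "1 \<le> C'^n"
      using \<open>1 \<le> C'\<close> by simp
    fix x and \<rho> :: real
    assume "0 < \<rho>"
    then have "measure \<mu> (qball d x (c * \<rho>)) \<le> measure \<mu> (qball d x (2^n * \<rho>))"
      using \<open>1 \<le> c\<close> \<open>c < 2^n\<close> by (intro measure_qball_mono) auto
    also have "\<dots> \<le> C'^n * measure \<mu> (qball d x \<rho>)"
      using iterate[OF \<open>0 < \<rho>\<close>] .
    finally show "measure \<mu> (qball d x (c * \<rho>)) \<le> C'^n * measure \<mu> (qball d x \<rho>)" .
  qed
qed

lemma one_le_ainf_const_enn:
  assumes w_meas: "w \<in> borel_measurable \<mu>" and w0: "\<And>y. 0 \<le> w y" and "0 < \<rho>"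
    and pos: "0 < (\<integral>\<^sup>+ y\<in>qball d x \<rho>. ennreal (w y) \<partial>\<mu>)"
    and fin: "(\<integral>\<^sup>+ y\<in>qball d x \<rho>. ennreal (w y) \<partial>\<mu>) < \<infinity>"
  shows "1 \<le> ainf_const_enn d \<mu> w"
proof -
  define B where "B = qball d x \<rho>"
  define X where "X = (\<integral>\<^sup>+ y\<in>B. ennreal (w y) \<partial>\<mu>)"
  have "0 < emeasure \<mu> B" "emeasure \<mu> B < \<infinity>"
    using emeasure_qball_pos[OF \<open>0 < \<rho>\<close>] emeasure_qball_finite[OF \<open>0 < \<rho>\<close>] by (simp_all add: B_def)
  have "(\<integral>\<^sup>+ y\<in>B. ennreal \<bar>indicator B y * w y\<bar> \<partial>\<mu>) = X"
    unfolding X_def by (intro nn_integral_cong) (auto simp: w0 split: split_indicator)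
  then have avg_le_maxfun: "X / emeasure \<mu> B \<le> maxfun d \<mu> (\<lambda>v. indicator B v * w v) y" if "y \<in> B" for y
    using maxfun_ge_avg[OF \<open>0 < \<rho>\<close>, where f="\<lambda>v. indicator B v * w v" and \<mu>=\<mu> and d=d and x=x] that
    by (simp add: B_def)
  have "X = (X / emeasure \<mu> B) * emeasure \<mu> B"
    using \<open>0 < emeasure \<mu> B\<close> \<open>emeasure \<mu> B < \<infinity>\<close> by (simp add: ennreal_divide_times)
  also have "\<dots> = (\<integral>\<^sup>+ y. (X / emeasure \<mu> B) * indicator B y \<partial>\<mu>)"
    by (simp add: nn_integral_cmult_indicator B_def)
  also have "\<dots> \<le> (\<integral>\<^sup>+ y\<in>B. maxfun d \<mu> (\<lambda>v. indicator B v * w v) y \<partial>\<mu>)"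
    by (intro nn_integral_mono) (auto split: split_indicator intro: avg_le_maxfun)
  finally have X_le: "X \<le> (\<integral>\<^sup>+ y\<in>B. maxfun d \<mu> (\<lambda>v. indicator B v * w v) y \<partial>\<mu>)" .
  have "1 = X / X"
    using pos fin by (simp add: X_def B_def ennreal_divide_self)
  also have "\<dots> \<le> (\<integral>\<^sup>+ y\<in>B. maxfun d \<mu> (\<lambda>v. indicator B v * w v) y \<partial>\<mu>) / X"
    by (rule divide_right_mono_ennreal[OF X_le])
  also have "\<dots> \<le> ainf_const_enn d \<mu> w"
    unfolding ainf_const_enn_def using \<open>0 < \<rho>\<close>
    by (intro SUP_upper2[of "(x, \<rho>)"]) (auto simp: B_def X_def)
  finally show ?thesis .
qed

lemma one_le_ainf_const:
  assumes w: "in_Ainf d \<mu> w" and "0 < \<rho>" and nonzero: "\<not> (AE y in \<mu>. y \<in> qball d x \<rho> \<longrightarrow> w y = 0)"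
  shows "1 \<le> ainf_const d \<mu> w"
proof -
  have w_meas [measurable]: "w \<in> borel_measurable \<mu>" and w0: "\<And>y. 0 \<le> w y"
    and wi: "set_integrable \<mu> (qball d x \<rho>) w" and "ainf_const_enn d \<mu> w < \<infinity>"
    using w \<open>0 < \<rho>\<close> by (auto simp: in_Ainf_def weight_def loc_int_def)
  have "(\<integral>\<^sup>+ y\<in>qball d x \<rho>. ennreal (w y) \<partial>\<mu>) \<noteq> 0"
  proof
    assume "(\<integral>\<^sup>+ y\<in>qball d x \<rho>. ennreal (w y) \<partial>\<mu>) = 0"
    then have "AE y in \<mu>. ennreal (w y) * indicator (qball d x \<rho>) y = 0"
      by (subst (asm) nn_integral_0_iff_AE) auto
    then have "AE y in \<mu>. y \<in> qball d x \<rho> \<longrightarrow> w y = 0"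
      by eventually_elim (auto simp: w0 split: split_indicator)
    then show False
      using nonzero by contradiction
  qed
  moreover have "(\<integral>\<^sup>+ y\<in>qball d x \<rho>. ennreal (w y) \<partial>\<mu>) < \<infinity>"
    using set_nn_integral_eq_set_integral[OF wi w0] by simp
  ultimately have "1 \<le> ainf_const_enn d \<mu> w"
    using one_le_ainf_const_enn[OF w_meas w0 \<open>0 < \<rho>\<close>] by (simp add: zero_less_iff_neq_zero)
  then show ?thesis
    using \<open>ainf_const_enn d \<mu> w < \<infinity>\<close> enn2real_mono[of 1 "ainf_const_enn d \<mu> w"]
    by (simp add: ainf_const_def)
qed

lemma power_mean_le_rh_const:
  assumes u: "in_RH d \<mu> cd q u" and "0 < a" "a \<le> q" "0 < \<rho>"
  shows "(avg \<mu> (\<lambda>y. u y powr a) (qball d x \<rho>)) powr (1/a)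
      \<le> rh_const d \<mu> cd q u * avg \<mu> u (qball d x (cd * \<rho>))"
proof -
  have "u \<in> borel_measurable \<mu>" "\<And>y. 0 \<le> u y" "set_integrable \<mu> (qball d x \<rho>) (\<lambda>y. u y powr q)"
    using u \<open>0 < \<rho>\<close> by (auto simp: in_RH_def weight_def loc_int_def)
  then have "(avg \<mu> (\<lambda>y. u y powr a) (qball d x \<rho>)) powr (1/a)
      \<le> (avg \<mu> (\<lambda>y. u y powr q) (qball d x \<rho>)) powr (1/q)"
    using assms emeasure_qball_finite[OF \<open>0 < \<rho>\<close>] measure_qball_pos[OF \<open>0 < \<rho>\<close>]
    by (intro avg_power_mean_mono) simp_all
  also have "\<dots> \<le> rh_const d \<mu> cd q u * avg \<mu> u (qball d x (cd * \<rho>))"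
    using rh_ineq_rh_const[OF u] \<open>0 < \<rho>\<close> by (simp add: rh_ineq_def)
  finally show ?thesis .
qed

lemma avg_le_rh_const:
  assumes u: "in_RH d \<mu> cd q u" and "1 \<le> q" "0 < \<rho>"
  shows "avg \<mu> u (qball d x \<rho>) \<le> rh_const d \<mu> cd q u * avg \<mu> u (qball d x (cd * \<rho>))"
  using power_mean_le_rh_const[OF u, of 1 \<rho> x] assms
  by (simp add: abs_of_nonneg in_RH_def weight_def)

lemma power_mean_le_sharp_rh:
  assumes u: "in_RH d \<mu> cd q u" and "1 \<le> r" "r \<le> q" "0 < \<rho>" "0 < P" "0 < a" "a \<le> r * P"
    and uP: "set_integrable \<mu> (qball d x \<rho>) (\<lambda>y. u y powr (r * P))"
    and sharp: "(avg \<mu> (\<lambda>y. u y powr (r * P)) (qball d x \<rho>)) powr (1/P)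
                \<le> Cs * avg \<mu> (\<lambda>y. u y powr r) (qball d x (cd * \<rho>))"
    and "1 \<le> Cs" "0 < cd"
  shows "(avg \<mu> (\<lambda>y. u y powr a) (qball d x \<rho>)) powr (1/a)
      \<le> Cs * rh_const d \<mu> cd q u * avg \<mu> u (qball d x (cd * (cd * \<rho>)))"
proof -
  have u_meas: "u \<in> borel_measurable \<mu>" and u0: "\<And>y. 0 \<le> u y"
    using u by (auto simp: in_RH_def weight_def)
  have "(avg \<mu> (\<lambda>y. u y powr a) (qball d x \<rho>)) powr (1/a)
      \<le> (avg \<mu> (\<lambda>y. u y powr (r * P)) (qball d x \<rho>)) powr (1/(r * P))"
    using assms u_meas u0 emeasure_qball_finite[OF \<open>0 < \<rho>\<close>] measure_qball_pos[OF \<open>0 < \<rho>\<close>]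
    by (intro avg_power_mean_mono) simp_all
  also have "\<dots> = ((avg \<mu> (\<lambda>y. u y powr (r * P)) (qball d x \<rho>)) powr (1/P)) powr (1/r)"
    by (simp add: powr_powr mult.commute)
  also have "\<dots> \<le> (Cs * avg \<mu> (\<lambda>y. u y powr r) (qball d x (cd * \<rho>))) powr (1/r)"
    using sharp \<open>1 \<le> r\<close> by (intro powr_mono2) auto
  also have "\<dots> = Cs powr (1/r) * (avg \<mu> (\<lambda>y. u y powr r) (qball d x (cd * \<rho>))) powr (1/r)"
    using \<open>1 \<le> Cs\<close> by (simp add: powr_mult avg_nonneg)
  also have "\<dots> \<le> Cs * (rh_const d \<mu> cd q u * avg \<mu> u (qball d x (cd * (cd * \<rho>))))"
  proof (intro mult_mono)
    show "Cs powr (1/r) \<le> Cs"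
      using powr_mono[of "1/r" 1 Cs] \<open>1 \<le> r\<close> \<open>1 \<le> Cs\<close> by simp
    show "(avg \<mu> (\<lambda>y. u y powr r) (qball d x (cd * \<rho>))) powr (1/r)
        \<le> rh_const d \<mu> cd q u * avg \<mu> u (qball d x (cd * (cd * \<rho>)))"
      using \<open>0 < cd\<close> \<open>0 < \<rho>\<close> assms by (intro power_mean_le_rh_const) auto
  qed (use \<open>1 \<le> Cs\<close> in auto)
  finally show ?thesis
    by (simp add: mult.assoc)
qed

end

definition sharp_RH_bound :: "('a \<Rightarrow> 'a \<Rightarrow> real) \<Rightarrow> 'a measure \<Rightarrow> real \<Rightarrow> real \<Rightarrow> real \<Rightarrow> bool" where
  "sharp_RH_bound d \<mu> cd \<tau> C \<longleftrightarrow> (\<forall>w. in_Ainf d \<mu> w \<longrightarrow>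
     (let p = 1 + 1 / (\<tau> * ainf_const d \<mu> w) in
       loc_int d \<mu> (\<lambda>y. w y powr p) \<and>
       (\<forall>x \<rho>. \<rho> > 0 \<longrightarrow>
          (avg \<mu> (\<lambda>y. w y powr p) (qball d x \<rho>)) powr (1 / p) \<le> C * avg \<mu> w (qball d x (cd * \<rho>)))))"

lemma sharp_RH_bound_mono:
  assumes "sharp_RH_bound d \<mu> cd \<tau> C" "C \<le> C'"
  shows "sharp_RH_bound d \<mu> cd \<tau> C'"
  unfolding sharp_RH_bound_def Let_def
proof (intro allI impI conjI)
  fix w x and \<rho> :: real
  assume w: "in_Ainf d \<mu> w" and "0 < \<rho>"
  let ?p = "1 + 1 / (\<tau> * ainf_const d \<mu> w)"
  have "(avg \<mu> (\<lambda>y. w y powr ?p) (qball d x \<rho>)) powr (1 / ?p) \<le> C * avg \<mu> w (qball d x (cd * \<rho>))"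
    using assms(1) w \<open>0 < \<rho>\<close> by (simp add: sharp_RH_bound_def Let_def)
  also have "\<dots> \<le> C' * avg \<mu> w (qball d x (cd * \<rho>))"
    using w \<open>C \<le> C'\<close> by (intro mult_right_mono avg_nonneg) (auto simp: in_Ainf_def weight_def)
  finally show "(avg \<mu> (\<lambda>y. w y powr ?p) (qball d x \<rho>)) powr (1 / ?p) \<le> C' * avg \<mu> w (qball d x (cd * \<rho>))" .
qed (use assms(1) in \<open>simp add: sharp_RH_bound_def Let_def\<close>)

lemma sharp_RH_iff: "sharp_RH d \<mu> cd \<tau> \<longleftrightarrow> 0 < \<tau> \<and> (\<exists>C. sharp_RH_bound d \<mu> cd \<tau> C)"
  by (simp add: sharp_RH_def sharp_RH_bound_def)

section \<open>The estimate on dilated balls\<close>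

lemma mult_min_le_powr:
  fixes K D e :: real
  assumes "0 \<le> K" "1 \<le> D" "1 \<le> e" "e \<le> 2"
  shows "K * min D K \<le> D * K powr e"
proof (cases "1 \<le> K")
  case True
  have "K * min D K \<le> K * D"
    using \<open>0 \<le> K\<close> by (intro mult_left_mono) auto
  also have "\<dots> \<le> K powr e * D"
    using powr_mono[OF \<open>1 \<le> e\<close> True] True \<open>1 \<le> D\<close> by (intro mult_right_mono) auto
  finally show ?thesis
    by (simp add: mult.commute)
next
  case False
  have "K * min D K \<le> K * K"
    using \<open>0 \<le> K\<close> by (intro mult_left_mono) auto
  also have "\<dots> \<le> K powr e"
  proof (cases "K = 0")
    case False
    then have "K powr 2 \<le> K powr e"
      using \<open>0 \<le> K\<close> \<open>\<not> 1 \<le> K\<close> \<open>e \<le> 2\<close> by (intro powr_mono') auto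
    then show ?thesis
      using \<open>0 \<le> K\<close> False by (simp add: powr_realpow power2_eq_square)
  qed simp
  also have "\<dots> \<le> D * K powr e"
    using mult_right_mono[OF \<open>1 \<le> D\<close>, of "K powr e"] by simp
  finally show ?thesis .
qed

lemma chain_le_powr:
  fixes a1 a2 a3 K D Cs e :: real
  assumes "0 \<le> K" "1 \<le> D" "1 \<le> Cs" "1 \<le> e" "e \<le> 2" "0 \<le> a2" "0 \<le> a3"
    and "a1 \<le> min D K * a2" "a2 \<le> min D K * a3"
  shows "D * a1 \<le> D^2 * Cs * K powr e * a3" and "Cs * K * (D * a2) \<le> D^2 * Cs * K powr e * a3"
proof -
  define t where "t = min D K"
  have "0 \<le> t" "t \<le> K" "K * t \<le> D * K powr e"
    using assms mult_min_le_powr[of K D e] by (auto simp: t_def)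
  have "D * a1 \<le> D * (t * (t * a3))"
    using assms \<open>0 \<le> t\<close> order_trans[OF \<open>a1 \<le> min D K * a2\<close> mult_left_mono[OF \<open>a2 \<le> min D K * a3\<close>]]
    by (simp add: t_def)
  also have "\<dots> \<le> D * (K * t * a3)"
    using assms \<open>0 \<le> t\<close> \<open>t \<le> K\<close> by (simp add: mult_left_mono mult_right_mono mult.assoc)
  also have "\<dots> \<le> D * (D * K powr e * a3)"
    using assms \<open>K * t \<le> D * K powr e\<close> by (simp add: mult_left_mono mult_right_mono)
  also have "\<dots> \<le> D^2 * Cs * K powr e * a3"
    using assms mult_right_mono[OF \<open>1 \<le> Cs\<close>, of "D^2 * K powr e * a3"]
    by (simp add: power2_eq_square mult_ac)
  finally show "D * a1 \<le> D^2 * Cs * K powr e * a3" .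
  have "K * a2 \<le> K * t * a3"
    using mult_left_mono[OF \<open>a2 \<le> min D K * a3\<close> \<open>0 \<le> K\<close>] by (simp add: t_def mult.assoc)
  then have "Cs * K * (D * a2) \<le> Cs * D * (K * t * a3)"
    using mult_left_mono[of "K * a2" "K * t * a3" "Cs * D"] assms by (simp add: mult_ac)
  also have "\<dots> \<le> Cs * D * (D * K powr e * a3)"
    using assms \<open>K * t \<le> D * K powr e\<close> by (simp add: mult_left_mono mult_right_mono)
  finally show "Cs * K * (D * a2) \<le> D^2 * Cs * K powr e * a3"
    by (simp add: power2_eq_square mult_ac)
qed

lemma powr_mult_powr_le:
  fixes Z V W L \<theta> :: real
  assumes "0 \<le> \<theta>" "\<theta> \<le> 1" "0 \<le> W" "0 \<le> Z" "Z \<le> W * L" "0 \<le> V" "V \<le> L"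
  shows "Z powr \<theta> * V powr (1 - \<theta>) \<le> W powr \<theta> * L"
proof -
  have "0 \<le> L"
    using assms by linarith
  have "Z powr \<theta> * V powr (1 - \<theta>) \<le> (W * L) powr \<theta> * L powr (1 - \<theta>)"
    using assms by (intro mult_mono powr_mono2) auto
  also have "\<dots> = W powr \<theta> * L"
  proof (cases "L = 0")
    case False
    then show ?thesis
      using \<open>0 \<le> L\<close> \<open>0 \<le> W\<close> by (simp add: powr_mult mult.assoc flip: powr_add)
  qed simp
  finally show ?thesis .
qed

lemma interpolation_exponent_cases:
  fixes r \<epsilon> :: real
  shows "(4 * (r * (1 + \<epsilon>)) - 1) / 3 \<le> 2 * r - 1 \<or> (4 * (r * (1 + \<epsilon>)) - 1) / 3 \<le> r * (1 + 2 * \<epsilon>)"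
  by (cases "r - 1 \<le> 2 * r * \<epsilon>") (auto simp: field_simps)

locale doubling_dilation = space_of_homogeneous_type +
  fixes cd D :: real
  assumes one_le_cd: "1 \<le> cd" and one_le_D: "1 \<le> D"
    and measure_qball_dilate_le: "0 < \<rho> \<Longrightarrow> measure \<mu> (qball d x (cd * \<rho>)) \<le> D * measure \<mu> (qball d x \<rho>)"
begin

lemma avg_le_avg_dilate:
  assumes "0 < \<rho>" "\<And>y. 0 \<le> f y" "set_integrable \<mu> (qball d x (cd * \<rho>)) f"
  shows "avg \<mu> f (qball d x \<rho>) \<le> D * avg \<mu> f (qball d x (cd * \<rho>))"
proof -
  have "0 < measure \<mu> (qball d x \<rho>)" "0 < measure \<mu> (qball d x (cd * \<rho>))"
    using assms one_le_cd by (simp_all add: measure_qball_pos)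
  have "0 \<le> wmeas \<mu> f (qball d x (cd * \<rho>))"
    using assms by (simp add: wmeas_def set_integral_nonneg)
  have "wmeas \<mu> f (qball d x \<rho>) \<le> wmeas \<mu> f (qball d x (cd * \<rho>))"
    unfolding wmeas_def using assms one_le_cd
    by (intro set_integral_mono_set qball_mono) simp_all
  then have "avg \<mu> f (qball d x \<rho>) \<le> wmeas \<mu> f (qball d x (cd * \<rho>)) / measure \<mu> (qball d x \<rho>)"
    using \<open>0 < measure \<mu> (qball d x \<rho>)\<close> by (simp add: avg_def divide_right_mono)
  also have "\<dots> \<le> wmeas \<mu> f (qball d x (cd * \<rho>)) / (measure \<mu> (qball d x (cd * \<rho>)) / D)"
    using measure_qball_dilate_le[OF \<open>0 < \<rho>\<close>, of x] one_le_D \<open>0 < measure \<mu> (qball d x \<rho>)\<close>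
      \<open>0 < measure \<mu> (qball d x (cd * \<rho>))\<close> \<open>0 \<le> wmeas \<mu> f (qball d x (cd * \<rho>))\<close>
    by (intro divide_left_mono) (simp_all add: divide_le_eq mult.commute)
  also have "\<dots> = D * avg \<mu> f (qball d x (cd * \<rho>))"
    using one_le_D by (simp add: avg_def)
  finally show ?thesis .
qed

lemma avg_le_min_avg_dilate:
  assumes u: "in_RH d \<mu> cd q u" and "1 \<le> q" "0 < \<rho>"
  shows "avg \<mu> u (qball d x \<rho>) \<le> min D (rh_const d \<mu> cd q u) * avg \<mu> u (qball d x (cd * \<rho>))"
proof -
  have "\<And>y. 0 \<le> u y" "set_integrable \<mu> (qball d x (cd * \<rho>)) u"
    using u \<open>0 < \<rho>\<close> one_le_cd by (auto simp: in_RH_def weight_def loc_int_def)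
  then have "avg \<mu> u (qball d x \<rho>) \<le> D * avg \<mu> u (qball d x (cd * \<rho>))"
    by (rule avg_le_avg_dilate[OF \<open>0 < \<rho>\<close>])
  moreover have "avg \<mu> u (qball d x \<rho>) \<le> rh_const d \<mu> cd q u * avg \<mu> u (qball d x (cd * \<rho>))"
    by (rule avg_le_rh_const[OF assms])
  ultimately show ?thesis
    by (simp add: min_def)
qed

lemma avg_indicator_le_avg_dilate:
  fixes u :: "'a \<Rightarrow> real"
  assumes "0 < \<rho>" "G \<in> sets \<mu>" and u_meas: "u \<in> borel_measurable \<mu>" and u0: "\<And>y. 0 \<le> u y"
    and ui: "set_integrable \<mu> (qball d x (cd * \<rho>)) u"
  shows "avg \<mu> (\<lambda>y. indicator G y * u y) (qball d x \<rho>)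
    \<le> D * (wmeas \<mu> u (G \<inter> qball d x (cd * \<rho>)) / wmeas \<mu> u (qball d x (cd * \<rho>)) * avg \<mu> u (qball d x (cd * \<rho>)))"
proof -
  have "set_integrable \<mu> (qball d x (cd * \<rho>)) (\<lambda>y. indicator G y * u y)"
  proof (rule set_integrable_bound[OF ui])
    show "set_borel_measurable \<mu> (qball d x (cd * \<rho>)) (\<lambda>y. indicator G y * u y)"
      unfolding set_borel_measurable_def using u_meas \<open>G \<in> sets \<mu>\<close> by measurable
  qed (use u0 in \<open>auto intro!: AE_I2 simp: indicator_def\<close>)
  then have "avg \<mu> (\<lambda>y. indicator G y * u y) (qball d x \<rho>) \<le> D * avg \<mu> (\<lambda>y. indicator G y * u y) (qball d x (cd * \<rho>))"
    using u0 by (intro avg_le_avg_dilate[OF \<open>0 < \<rho>\<close>]) auto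
  then show ?thesis
    by (simp add: avg_indicator_mult[OF \<open>G \<in> sets \<mu>\<close> qball_sets u0 ui])
qed

lemma power_mean_le_avg_double_dilate:
  assumes u: "in_RH d \<mu> cd q u" and "1 \<le> r" "r \<le> q" "0 < \<rho>" "0 < P" "1 \<le> Cs"
    and uP: "set_integrable \<mu> (qball d x \<rho>) (\<lambda>y. u y powr (r * P))"
    and sharp: "(avg \<mu> (\<lambda>y. u y powr (r * P)) (qball d x \<rho>)) powr (1/P)
                \<le> Cs * avg \<mu> (\<lambda>y. u y powr r) (qball d x (cd * \<rho>))"
    and "0 < a" and a_le: "a \<le> q \<or> a \<le> r * P"
  shows "set_integrable \<mu> (qball d x \<rho>) (\<lambda>y. u y powr a)"
    and "(avg \<mu> (\<lambda>y. u y powr a) (qball d x \<rho>)) powr (1/a)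
      \<le> Cs * rh_const d \<mu> cd q u * (D * avg \<mu> u (qball d x (cd * (cd * \<rho>))))"
proof -
  have u_meas: "u \<in> borel_measurable \<mu>" and u0: "\<And>y. 0 \<le> u y"
    and ui: "\<And>\<rho>'. 0 < \<rho>' \<Longrightarrow> set_integrable \<mu> (qball d x \<rho>') u"
    and uq: "set_integrable \<mu> (qball d x \<rho>) (\<lambda>y. u y powr q)"
    using u \<open>0 < \<rho>\<close> by (auto simp: in_RH_def weight_def loc_int_def)
  have "0 < cd * \<rho>" "0 < cd * (cd * \<rho>)"
    using one_le_cd \<open>0 < \<rho>\<close> by simp_all
  have Ku: "0 \<le> rh_const d \<mu> cd q u"
    using rh_const_nonneg[OF u] .
  have "0 \<le> avg \<mu> u (qball d x (cd * (cd * \<rho>)))"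
    using u0 by (rule avg_nonneg)
  show "set_integrable \<mu> (qball d x \<rho>) (\<lambda>y. u y powr a)"
    using a_le set_integrable_powr_smaller_exponent[OF qball_sets emeasure_qball_finite[OF \<open>0 < \<rho>\<close>] u_meas u0 \<open>0 < a\<close>]
      uq uP by blast
  from a_le show "(avg \<mu> (\<lambda>y. u y powr a) (qball d x \<rho>)) powr (1/a)
      \<le> Cs * rh_const d \<mu> cd q u * (D * avg \<mu> u (qball d x (cd * (cd * \<rho>))))"
  proof
    assume "a \<le> q"
    have "(avg \<mu> (\<lambda>y. u y powr a) (qball d x \<rho>)) powr (1/a)
        \<le> rh_const d \<mu> cd q u * avg \<mu> u (qball d x (cd * \<rho>))"
      using power_mean_le_rh_const[OF u \<open>0 < a\<close> \<open>a \<le> q\<close> \<open>0 < \<rho>\<close>] .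
    also have "\<dots> \<le> rh_const d \<mu> cd q u * (D * avg \<mu> u (qball d x (cd * (cd * \<rho>))))"
      using avg_le_avg_dilate[OF \<open>0 < cd * \<rho>\<close> u0 ui[OF \<open>0 < cd * (cd * \<rho>)\<close>]] Ku
      by (rule mult_left_mono)
    also have "\<dots> \<le> Cs * rh_const d \<mu> cd q u * (D * avg \<mu> u (qball d x (cd * (cd * \<rho>))))"
      using mult_right_mono[OF \<open>1 \<le> Cs\<close>, of "rh_const d \<mu> cd q u * (D * avg \<mu> u (qball d x (cd * (cd * \<rho>))))"]
        Ku one_le_D \<open>0 \<le> avg \<mu> u (qball d x (cd * (cd * \<rho>)))\<close>
      by (simp add: mult.assoc)
    finally show ?thesis .
  next
    assume "a \<le> r * P"
    have "(avg \<mu> (\<lambda>y. u y powr a) (qball d x \<rho>)) powr (1/a)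
        \<le> Cs * rh_const d \<mu> cd q u * avg \<mu> u (qball d x (cd * (cd * \<rho>)))"
      using assms \<open>a \<le> r * P\<close> one_le_cd by (intro power_mean_le_sharp_rh) auto
    also have "\<dots> \<le> Cs * rh_const d \<mu> cd q u * (D * avg \<mu> u (qball d x (cd * (cd * \<rho>))))"
      using mult_right_mono[OF one_le_D \<open>0 \<le> avg \<mu> u (qball d x (cd * (cd * \<rho>)))\<close>] \<open>1 \<le> Cs\<close> Ku
      by (intro mult_left_mono) simp_all
    finally show ?thesis .
  qed
qed

lemma orlicz_norm_indicator_le:
  fixes u :: "'a \<Rightarrow> real"
  assumes "0 < \<rho>" "1 \<le> r" "0 < \<epsilon>" "1 \<le> \<kappa>" "1 \<le> Cs"
    and A: "young_function A" and growth: "\<forall>t\<ge>1. A t \<le> \<kappa> * t powr (r * (1 + \<epsilon>))"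
    and u: "in_RH d \<mu> cd (2 * r - 1) u"
    and uP: "set_integrable \<mu> (qball d x \<rho>) (\<lambda>y. u y powr (r * (1 + 2 * \<epsilon>)))"
    and sharp: "(avg \<mu> (\<lambda>y. u y powr (r * (1 + 2 * \<epsilon>))) (qball d x \<rho>)) powr (1 / (1 + 2 * \<epsilon>))
                \<le> Cs * avg \<mu> (\<lambda>y. u y powr r) (qball d x (cd * \<rho>))"
    and G: "G \<in> sets \<mu>"
  shows "orlicz_norm \<mu> A (\<lambda>y. indicator G y * u y) (qball d x \<rho>)
    \<le> ennreal (2 * D^2 * Cs * \<kappa> * rh_const d \<mu> cd (2 * r - 1) u powr (1 + (2 * r - 1) / (4 * r))
         * avg \<mu> u (qball d x (cd^3 * \<rho>)) * wavg_char \<mu> u G (qball d x (cd * \<rho>)) (4 * (1 + \<epsilon>) * r))"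
proof -
  define q where "q = 2 * r - 1"
  define p where "p = r * (1 + \<epsilon>)"
  define m where "m = (4 * p - 1) / 3"
  define \<theta> where "\<theta> = 1 / (4 * p)"
  define Ku where "Ku = rh_const d \<mu> cd q u"
  define a where "a i = avg \<mu> u (qball d x (cd^i * \<rho>))" for i :: nat
  define W where "W = wmeas \<mu> u (G \<inter> qball d x (cd * \<rho>)) / wmeas \<mu> u (qball d x (cd * \<rho>))"
  define g where "g = (\<lambda>y. indicator G y * u y)"
  have u_meas: "u \<in> borel_measurable \<mu>" and u0: "\<And>y. 0 \<le> u y"
    and ui: "\<And>\<rho>'. 0 < \<rho>' \<Longrightarrow> set_integrable \<mu> (qball d x \<rho>') u"
    using u by (auto simp: in_RH_def weight_def loc_int_def)
  have radius_pos: "0 < cd^i * \<rho>" for i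
    using one_le_cd \<open>0 < \<rho>\<close> by simp
  have "1 \<le> q" "r \<le> q" "1 \<le> p" "0 \<le> Ku"
    using \<open>1 \<le> r\<close> \<open>0 < \<epsilon>\<close> rh_const_nonneg[OF u]
    by (auto simp: q_def p_def Ku_def intro: order_trans[OF \<open>1 \<le> r\<close>])
  have a0: "0 \<le> a i" for i
    using u0 by (simp add: a_def avg_nonneg)
  have uq: "in_RH d \<mu> cd q u"
    using u by (simp add: q_def)
  have chain: "a i \<le> min D Ku * a (Suc i)" for i
    using avg_le_min_avg_dilate[OF uq \<open>1 \<le> q\<close> radius_pos[of i], of x]
    by (simp add: a_def Ku_def mult.assoc)
  have um: "set_integrable \<mu> (qball d x \<rho>) (\<lambda>y. u y powr m)"
    and V: "(avg \<mu> (\<lambda>y. u y powr m) (qball d x \<rho>)) powr (1/m) \<le> Cs * Ku * (D * a 2)"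
    using power_mean_le_avg_double_dilate[OF uq \<open>1 \<le> r\<close> \<open>r \<le> q\<close> \<open>0 < \<rho>\<close> _ \<open>1 \<le> Cs\<close> uP sharp, of m]
      interpolation_exponent_cases[of r \<epsilon>] \<open>0 < \<epsilon>\<close> \<open>1 \<le> p\<close>
    by (simp_all add: m_def p_def q_def Ku_def a_def power2_eq_square mult.assoc)
  have "0 \<le> W"
    using u0 by (simp add: W_def wmeas_def set_integral_nonneg)
  have g_meas: "g \<in> borel_measurable \<mu>"
    using u_meas G by (simp add: g_def)
  have g0: "\<And>y. 0 \<le> g y" and g_le_u: "\<And>y. g y \<le> u y"
    using u0 by (simp_all add: g_def indicator_def)
  have Z: "avg \<mu> g (qball d x \<rho>) \<le> W * (D * a 1)"
    using avg_indicator_le_avg_dilate[OF \<open>0 < \<rho>\<close> G u_meas u0 ui] \<open>0 < \<rho>\<close> one_le_cd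
    by (simp add: g_def W_def a_def mult_ac)
  have "orlicz_norm \<mu> A g (qball d x \<rho>)
      \<le> ennreal (2 * \<kappa> * ((avg \<mu> g (qball d x \<rho>)) powr \<theta> * ((avg \<mu> (\<lambda>y. u y powr m) (qball d x \<rho>)) powr (1/m)) powr (1 - \<theta>)))"
    using orlicz_norm_le_interpolation[OF qball_sets emeasure_qball_finite[OF \<open>0 < \<rho>\<close>] measure_qball_pos[OF \<open>0 < \<rho>\<close>]
        A \<open>1 \<le> \<kappa>\<close> \<open>1 \<le> p\<close> _ g_meas u_meas g0 g_le_u m_def um] growth
    by (simp add: \<theta>_def p_def)
  also have "\<dots> \<le> ennreal (2 * \<kappa> * (W powr \<theta> * (D^2 * Cs * Ku powr (1 + q / (4 * r)) * a 3)))"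
  proof (intro ennreal_leI mult_left_mono powr_mult_powr_le)
    have e: "1 \<le> 1 + q / (4 * r)" "1 + q / (4 * r) \<le> 2"
      using \<open>1 \<le> r\<close> \<open>1 \<le> q\<close> by (simp_all add: q_def field_simps)
    have "a 1 \<le> min D Ku * a 2" "a 2 \<le> min D Ku * a 3"
      using chain[of 1] chain[of 2] by (simp_all add: numeral_2_eq_2 numeral_3_eq_3)
    note L = chain_le_powr[OF \<open>0 \<le> Ku\<close> one_le_D \<open>1 \<le> Cs\<close> e a0 a0 this]
    show "avg \<mu> g (qball d x \<rho>) \<le> W * (D^2 * Cs * Ku powr (1 + q / (4 * r)) * a 3)"
      using Z L(1) \<open>0 \<le> W\<close> by (smt (verit) mult_left_mono)
    show "(avg \<mu> (\<lambda>y. u y powr m) (qball d x \<rho>)) powr (1/m) \<le> D^2 * Cs * Ku powr (1 + q / (4 * r)) * a 3"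
      using V L(2) by linarith
  qed (use \<open>1 \<le> p\<close> \<open>0 \<le> W\<close> \<open>1 \<le> \<kappa>\<close> g0 in \<open>auto simp: \<theta>_def intro: avg_nonneg\<close>)
  finally show ?thesis
    by (simp add: wavg_char_def W_def \<theta>_def p_def a_def Ku_def q_def g_def mult_ac)
qed

lemma orlicz_norm_indicator_le_Ainf:
  fixes u :: "'a \<Rightarrow> real"
  assumes "0 < \<rho>" "1 \<le> r" "0 < \<tau>" "1 \<le> Cs" and Cs: "sharp_RH_bound d \<mu> cd \<tau> Cs"
    and A: "young_function A" and \<kappa>: "kappa_fun A r \<kappa>"
    and u: "in_RH d \<mu> cd (2 * r - 1) u" and ur: "in_Ainf d \<mu> (\<lambda>y. u y powr r)"
    and \<epsilon>_def: "\<epsilon> = 1 / (2 * \<tau> * ainf_const d \<mu> (\<lambda>y. u y powr r))"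
    and G: "G \<in> sets \<mu>"
  shows "orlicz_norm \<mu> A (\<lambda>y. indicator G y * u y) (qball d x \<rho>)
    \<le> ennreal (2 * D^2 * Cs * \<kappa> \<epsilon> * rh_const d \<mu> cd (2 * r - 1) u powr (1 + (2 * r - 1) / (4 * r))
         * avg \<mu> u (qball d x (cd^3 * \<rho>)) * wavg_char \<mu> u G (qball d x (cd * \<rho>)) (4 * (1 + \<epsilon>) * r))"
proof (cases "AE y in \<mu>. y \<in> qball d x \<rho> \<longrightarrow> u y = 0")
  case True
  then have "AE y in \<mu>. y \<in> qball d x \<rho> \<longrightarrow> indicator G y * u y = 0"
    by eventually_elim simp
  then show ?thesis
    by (simp add: orlicz_norm_eq_0[OF A])
next
  case False
  then have "\<not> (AE y in \<mu>. y \<in> qball d x \<rho> \<longrightarrow> u y powr r = 0)"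
    by simp
  then have "1 \<le> ainf_const d \<mu> (\<lambda>y. u y powr r)"
    by (rule one_le_ainf_const[OF ur \<open>0 < \<rho>\<close>])
  then have "0 < \<epsilon>"
    using \<open>0 < \<tau>\<close> by (simp add: \<epsilon>_def)
  then have "1 \<le> \<kappa> \<epsilon>" "\<forall>t\<ge>1. A t \<le> \<kappa> \<epsilon> * t powr (r * (1 + \<epsilon>))"
    using \<kappa> by (auto simp: kappa_fun_def)
  moreover have "1 / (\<tau> * ainf_const d \<mu> (\<lambda>y. u y powr r)) = 2 * \<epsilon>"
    by (simp add: \<epsilon>_def)
  then have "loc_int d \<mu> (\<lambda>y. u y powr (r * (1 + 2 * \<epsilon>)))"
    and "(avg \<mu> (\<lambda>y. u y powr (r * (1 + 2 * \<epsilon>))) (qball d x \<rho>)) powr (1 / (1 + 2 * \<epsilon>))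
        \<le> Cs * avg \<mu> (\<lambda>y. u y powr r) (qball d x (cd * \<rho>))"
    using Cs ur \<open>0 < \<rho>\<close> by (auto simp: sharp_RH_bound_def Let_def powr_powr)
  ultimately show ?thesis
    using orlicz_norm_indicator_le[OF \<open>0 < \<rho>\<close> \<open>1 \<le> r\<close> \<open>0 < \<epsilon>\<close> _ \<open>1 \<le> Cs\<close> A _ u _ _ G] \<open>0 < \<rho>\<close>
    by (simp add: loc_int_def)
qed

lemma orlicz_norm_dil_cube_le:
  assumes "dyadic_system d \<mu> c0 C0 \<delta> J Q z" "0 < \<tau>" "1 \<le> Cs" "sharp_RH_bound d \<mu> cd \<tau> Cs"
    and "1 \<le> r" "young_function A" "kappa_fun A r \<kappa>"
    and "in_RH d \<mu> cd (2 * r - 1) u" "in_Ainf d \<mu> (\<lambda>x. u x powr r)" "G \<in> sets \<mu>"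
  shows "let q = 2 * r - 1;
          \<epsilon> = 1 / (2 * \<tau> * ainf_const d \<mu> (\<lambda>x. u x powr r));
          s = 4 * (1 + \<epsilon>) * r
      in orlicz_norm \<mu> A (\<lambda>x. indicator G x * u x) (dil_cube d C0 \<delta> z 1 k j)
         \<le> ennreal (2 * D^2 * Cs * \<kappa> \<epsilon> * rh_const d \<mu> cd q u powr (1 + q / (4 * r))
                    * avg \<mu> u (dil_cube d C0 \<delta> z (cd ^ 3) k j)
                    * wavg_char \<mu> u G (dil_cube d C0 \<delta> z cd k j) s)"
proof -
  have "0 < C0 * \<delta> powr real_of_int k"
    using assms(1) by (simp add: dyadic_system_def)
  moreover have "dil_cube d C0 \<delta> z \<alpha> k j = qball d (z k j) (\<alpha> * (C0 * \<delta> powr real_of_int k))" for \<alpha>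
    by (simp add: dil_cube_def mult.assoc)
  ultimately show ?thesis
    using orlicz_norm_indicator_le_Ainf[OF _ assms(5,2,3,4,6,7,8,9) refl assms(10)] by (simp add: Let_def)
qed

end

theorem lemma3p10:
  fixes d :: "'a \<Rightarrow> 'a \<Rightarrow> real" and \<mu> :: "'a measure" and K :: real
    and c0 C0 \<delta> :: real and J :: "int \<Rightarrow> 'i set" and Q :: "int \<Rightarrow> 'i \<Rightarrow> 'a set"
    and z :: "int \<Rightarrow> 'i \<Rightarrow> 'a" and cd \<tau> :: real
  assumes "homogeneous_space d K \<mu>"
    and "dyadic_system d \<mu> c0 C0 \<delta> J Q z"
    and "1 \<le> cd" and "sharp_RH d \<mu> cd \<tau>"
  shows "\<exists>c>0. \<forall>(r::real) (A::real \<Rightarrow> real) (\<kappa>::real \<Rightarrow> real) (u::'a \<Rightarrow> real) k j G.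
     1 \<le> r \<longrightarrow> young_function A \<longrightarrow> (\<forall>\<rho>>r. B_cond A \<rho>) \<longrightarrow> kappa_fun A r \<kappa> \<longrightarrow>
     in_RH d \<mu> cd (2 * r - 1) u \<longrightarrow> in_Ainf d \<mu> (\<lambda>x. u x powr r) \<longrightarrow>
     j \<in> J k \<longrightarrow> G \<in> sets \<mu> \<longrightarrow>
     (let q = 2 * r - 1;
          \<epsilon> = 1 / (2 * \<tau> * ainf_const d \<mu> (\<lambda>x. u x powr r));
          s = 4 * (1 + \<epsilon>) * r
      in orlicz_norm \<mu> A (\<lambda>x. indicator G x * u x) (dil_cube d C0 \<delta> z 1 k j)
         \<le> ennreal (c * \<kappa> \<epsilon> * rh_const d \<mu> cd q u powr (1 + q / (4 * r))
                    * avg \<mu> u (dil_cube d C0 \<delta> z (cd ^ 3) k j)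
                    * wavg_char \<mu> u G (dil_cube d C0 \<delta> z cd k j) s))"
proof -
  interpret space_of_homogeneous_type d K \<mu>
    by unfold_locales (fact assms(1))
  obtain D where "1 \<le> D" "\<And>x \<rho>. 0 < \<rho> \<Longrightarrow> measure \<mu> (qball d x (cd * \<rho>)) \<le> D * measure \<mu> (qball d x \<rho>)"
    using dilation_doubling[OF assms(3)] by blast
  then interpret doubling_dilation d K \<mu> cd D
    using assms(3) by unfold_locales auto
  obtain C where "0 < \<tau>" and C: "sharp_RH_bound d \<mu> cd \<tau> C"
    using assms(4) by (auto simp: sharp_RH_iff)
  have "sharp_RH_bound d \<mu> cd \<tau> (max C 1)"
    using C by (rule sharp_RH_bound_mono) simp
  \<comment> \<open>the \<open>B\<^sub>\<rho>\<close> hypothesis on \<open>A\<close> enters only through its consequence \<open>kappa_fun A r \<kappa>\<close>\<close>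
  then show ?thesis
    using orlicz_norm_dil_cube_le[OF assms(2) \<open>0 < \<tau>\<close>] one_le_D
    by (intro exI[of _ "2 * D^2 * max C 1"]) auto
qed

end
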